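(* Fix $d \geq 2$. There exists a constant $c = c(d)$ such that for all $n$ large enough, all integers $k \geq n/(3d)$ and all $\theta \geq 1/(2d)$, the number of $(d-1)$-dimensional subcomplexes $X$ of the simplex on $n$ vertices with $|X| = k$ and $\beta(X) \leq (1-\theta)kn$ is at most $$\left(c\, n^{(d-1)\left(1 - \theta\left(1 - \frac{1}{2d^2}\right)\right)}\right)^k.$$
   Context: A $(d-1)$-dimensional subcomplex $X$ of the simplex on $[n]$ is identified with its set of $(d-1)$-faces, and $|X|$ is their number. $\beta(X)$ is the number of $d$-faces of the full simplex on $[n]$ that contain exactly one $(d-1)$-face of $X$. *)

theory Defs
  imports Complex_Main
begin

text \<open>Faces of the full simplex on the vertex set [n] = {0..<n} with exactly j vertices
  (i.e. (j-1)-dimensional faces).\<close>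
definition faces :: "nat \<Rightarrow> nat \<Rightarrow> nat set set" where
  "faces n j = {\<sigma>. \<sigma> \<subseteq> {0..<n} \<and> card \<sigma> = j}"

definition beta :: "nat \<Rightarrow> nat \<Rightarrow> nat set set \<Rightarrow> nat" where
  "beta n d X = card {\<sigma> \<in> faces n (d+1). card {\<tau> \<in> X. \<tau> \<subseteq> \<sigma>} = 1}"

end

theory Submission
  imports Defs
begin

text \<open>Call a \<open>(d-2)\<close>-face heavy for \<open>X\<close> if more than \<open>n/q\<close> faces of \<open>X\<close> contain it,
  where \<open>q = 8 d\<^sup>4\<close>; double counting shows there are at most \<open>q d k / n\<close> heavy ridges, and at
  most \<open>q d k\<close> faces of the simplex pass through them. A light face \<open>\<tau>\<close> of \<open>X\<close>, one containing no
  heavy ridge, is the only face of \<open>X\<close> in all but at most \<open>d n / q\<close> of the \<open>n - d\<close> cofaces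
  \<open>\<tau> + w\<close>, since another face of \<open>X\<close> in \<open>\<tau> + w\<close> must contain \<open>w\<close> and one of the \<open>d\<close> light
  facets of \<open>\<tau>\<close>. These cofaces are counted by \<open>\<beta>(X)\<close>, so \<open>\<beta>(X) \<le> (1 - \<theta>) k n\<close> leaves at most
  \<open>k (1 - \<theta> (1 - 1/(2 d\<^sup>2)))\<close> light faces. Hence \<open>X\<close> is determined by its heavy ridges
  (\<open>2\<^bsup>O(k)\<^esup>\<close> choices), its faces through them (\<open>2\<^bsup>q d k\<^esup>\<close> choices) and its few light
  faces (at most \<open>n\<^bsup>(d-1) k (1 - \<theta> (1 - 1/(2 d\<^sup>2)))\<^esup> e\<^sup>n\<close> choices), and \<open>e\<^sup>n \<le> e\<^bsup>3 d k\<^esup>\<close>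
  because \<open>k \<ge> n / (3 d)\<close>.\<close>

lemma pow_div_fact_le_exp:
  fixes x :: real
  assumes "x \<ge> 0"
  shows "x ^ j / fact j \<le> exp x"
proof -
  obtain t where t: "exp x = (\<Sum>m<Suc j. x ^ m / fact m) + exp t / fact (Suc j) * x ^ Suc j"
    using Maclaurin_exp_le by blast
  have "x ^ j / fact j \<le> (\<Sum>m<Suc j. x ^ m / fact m)"
    using assms by (intro member_le_sum) auto
  moreover have "0 \<le> exp t / fact (Suc j) * x ^ Suc j"
    using assms by simp
  ultimately show ?thesis
    using t by linarith
qed

lemma choose_le_pow: "n choose s \<le> n ^ s"
proof -
  have "(n choose s) * 1 \<le> (n choose s) * fact s"
    by (intro mult_le_mono2) simp
  also have "\<dots> \<le> n ^ s"
    by (rule binomial_fact_pow)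
  finally show ?thesis by simp
qed

lemma card_subsets_card_le:
  assumes "finite S"
  shows "card {B. B \<subseteq> S \<and> card B \<le> m} \<le> (card S + 1) ^ m"
proof (induction m)
  case 0
  have "{B. B \<subseteq> S \<and> card B \<le> 0} \<subseteq> {{}}"
    using assms by (auto dest: finite_subset)
  then have "card {B. B \<subseteq> S \<and> card B \<le> 0} \<le> card {{}::'a set}"
    by (intro card_mono) auto
  then show ?case by simp
next
  case (Suc m)
  let ?P = "{B. B \<subseteq> S \<and> card B \<le> m}"
  let ?ins = "\<lambda>(x, B). insert x B"
  have "finite ?P"
    by (rule finite_subset[of _ "Pow S"]) (use assms in auto)
  have "{B. B \<subseteq> S \<and> card B \<le> Suc m} \<subseteq> ?P \<union> ?ins ` (S \<times> ?P)"
  proof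
    fix B assume B: "B \<in> {B. B \<subseteq> S \<and> card B \<le> Suc m}"
    show "B \<in> ?P \<union> ?ins ` (S \<times> ?P)"
    proof (cases "card B \<le> m")
      case True
      then show ?thesis
        using B by auto
    next
      case False
      then have "B \<noteq> {}" by auto
      then obtain x where x: "x \<in> B" by auto
      have "finite B"
        using B assms finite_subset by auto
      then have "(x, B - {x}) \<in> S \<times> ?P"
        using B x by auto
      moreover have "B = ?ins (x, B - {x})"
        using x by auto
      ultimately show ?thesis
        by blast
    qed
  qed
  then have "card {B. B \<subseteq> S \<and> card B \<le> Suc m} \<le> card (?P \<union> ?ins ` (S \<times> ?P))"
    using \<open>finite ?P\<close> assms by (intro card_mono) auto
  also have "\<dots> \<le> card ?P + card (?ins ` (S \<times> ?P))"
    by (rule card_Un_le)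
  also have "\<dots> \<le> card ?P + card (S \<times> ?P)"
    using card_image_le[of "S \<times> ?P" ?ins] assms \<open>finite ?P\<close> by simp
  also have "\<dots> = (card S + 1) * card ?P"
    by (simp add: card_cartesian_product)
  also have "\<dots> \<le> (card S + 1) * (card S + 1) ^ m"
    using Suc by (intro mult_le_mono2)
  finally show ?case
    by simp
qed

lemma finite_faces: "finite (faces n j)"
  unfolding faces_def by (rule finite_subset[of _ "Pow {0..<n}"]) auto

lemma card_faces: "card (faces n j) = n choose j"
  unfolding faces_def using n_subsets[of "{0..<n}" j] by simp

lemma finite_face: "\<sigma> \<in> faces n j \<Longrightarrow> finite \<sigma>"
  unfolding faces_def using finite_subset by auto

lemma card_facets:
  assumes "finite \<tau>" "card \<tau> = d" "d \<ge> 1"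
  shows "card {\<rho>. \<rho> \<subseteq> \<tau> \<and> card \<rho> = d - 1} = d"
proof -
  have "card {\<rho>. \<rho> \<subseteq> \<tau> \<and> card \<rho> = d - 1} = d choose (d - 1)"
    using n_subsets[OF assms(1), of "d - 1"] assms by simp
  also have "\<dots> = d"
    using assms(3) by (cases d) (auto simp: binomial_symmetric[of "d - 1" d])
  finally show ?thesis .
qed

definition face_degree :: "nat set set \<Rightarrow> nat set \<Rightarrow> nat" where
  "face_degree X \<rho> = card {\<tau> \<in> X. \<rho> \<subseteq> \<tau>}"

definition lonely_cofaces :: "nat \<Rightarrow> nat \<Rightarrow> nat set set \<Rightarrow> nat set \<Rightarrow> nat set set" where
  "lonely_cofaces n d X \<tau> = {\<sigma> \<in> faces n (d + 1). {\<tau>' \<in> X. \<tau>' \<subseteq> \<sigma>} = {\<tau>}}"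

lemma sum_card_lonely_cofaces_le_beta:
  assumes "finite T"
  shows "(\<Sum>\<tau>\<in>T. card (lonely_cofaces n d X \<tau>)) \<le> beta n d X"
proof -
  have "finite (lonely_cofaces n d X \<tau>)" for \<tau>
    unfolding lonely_cofaces_def using finite_faces by simp
  moreover have "lonely_cofaces n d X \<tau> \<inter> lonely_cofaces n d X \<tau>' = {}" if "\<tau> \<noteq> \<tau>'" for \<tau> \<tau>'
    using that unfolding lonely_cofaces_def by auto
  ultimately have "(\<Sum>\<tau>\<in>T. card (lonely_cofaces n d X \<tau>)) = card (\<Union>\<tau>\<in>T. lonely_cofaces n d X \<tau>)"
    by (intro card_UN_disjoint[OF assms, symmetric]) auto
  also have "\<dots> \<le> beta n d X"
    unfolding beta_def lonely_cofaces_def by (rule card_mono) (auto simp: finite_faces)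
  finally show ?thesis .
qed

lemma card_insert_cofaces:
  assumes "\<tau> \<in> faces n d"
  shows "card ((\<lambda>w. insert w \<tau>) ` ({0..<n} - \<tau>)) = n - d"
proof -
  have "inj_on (\<lambda>w. insert w \<tau>) ({0..<n} - \<tau>)"
    by (rule inj_onI) (metis DiffD2 insertE insertI1)
  then have "card ((\<lambda>w. insert w \<tau>) ` ({0..<n} - \<tau>)) = card ({0..<n} - \<tau>)"
    by (rule card_image)
  also have "\<dots> = n - d"
    using assms finite_face[OF assms] unfolding faces_def by (simp add: card_Diff_subset)
  finally show ?thesis .
qed

lemma other_face_in_insert_coface:
  assumes "\<tau> \<in> faces n d" "\<tau>' \<in> faces n d" "\<tau>' \<noteq> \<tau>" "\<tau>' \<subseteq> insert w \<tau>"
  shows "\<tau>' - {w} \<subseteq> \<tau>" "card (\<tau>' - {w}) = d - 1" "\<tau> \<union> \<tau>' = insert w \<tau>"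
proof -
  have "card \<tau> = d" "card \<tau>' = d" "finite \<tau>'"
    using assms(1,2) finite_face[OF assms(2)] unfolding faces_def by auto
  then have "\<not> \<tau>' \<subseteq> \<tau>"
    using assms(3) card_subset_eq[OF finite_face[OF assms(1)]] by metis
  then have "w \<in> \<tau>'"
    using assms(4) by auto
  then show "\<tau>' - {w} \<subseteq> \<tau>" "card (\<tau>' - {w}) = d - 1" "\<tau> \<union> \<tau>' = insert w \<tau>"
    using assms(4) \<open>card \<tau>' = d\<close> \<open>finite \<tau>'\<close> by auto
qed

lemma insert_cofaces_diff_subset_lonely_cofaces:
  assumes X: "X \<subseteq> faces n d" and "\<tau> \<in> X"
  shows "(\<lambda>w. insert w \<tau>) ` ({0..<n} - \<tau>)
           - (\<lambda>\<tau>'. \<tau> \<union> \<tau>') ` (\<Union>\<rho>\<in>{\<rho>. \<rho> \<subseteq> \<tau> \<and> card \<rho> = d - 1}. {\<tau>' \<in> X. \<rho> \<subseteq> \<tau>'})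
         \<subseteq> lonely_cofaces n d X \<tau>" (is "?A - ?U \<subseteq> _")
proof
  have \<tau>: "\<tau> \<in> faces n d"
    using X \<open>\<tau> \<in> X\<close> by auto
  fix \<sigma> assume \<sigma>: "\<sigma> \<in> ?A - ?U"
  then obtain w where w: "w \<in> {0..<n} - \<tau>" "\<sigma> = insert w \<tau>"
    by auto
  have "\<tau>' = \<tau>" if "\<tau>' \<in> X" "\<tau>' \<subseteq> \<sigma>" for \<tau>'
  proof (rule ccontr)
    assume "\<tau>' \<noteq> \<tau>"
    with other_face_in_insert_coface[OF \<tau>, of \<tau>' w] that X w
    have "\<tau>' - {w} \<subseteq> \<tau>" "card (\<tau>' - {w}) = d - 1" "\<tau> \<union> \<tau>' = \<sigma>"
      by auto
    then have "\<sigma> \<in> ?U"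
      using that by blast
    then show False
      using \<sigma> by blast
  qed
  moreover have "\<sigma> \<in> faces n (d + 1)"
    using w \<tau> finite_face[OF \<tau>] unfolding faces_def by auto
  ultimately show "\<sigma> \<in> lonely_cofaces n d X \<tau>"
    unfolding lonely_cofaces_def using \<open>\<tau> \<in> X\<close> w by auto
qed

lemma card_lonely_cofaces_ge:
  assumes X: "X \<subseteq> faces n d" and "\<tau> \<in> X" and "d \<ge> 1" "q > 0"
    and light: "\<And>\<rho>. \<rho> \<subseteq> \<tau> \<Longrightarrow> card \<rho> = d - 1 \<Longrightarrow> q * face_degree X \<rho> \<le> n"
  shows "real (card (lonely_cofaces n d X \<tau>)) \<ge> real n - real d - real d * real n / real q"
proof -
  have \<tau>: "\<tau> \<in> faces n d"
    using X \<open>\<tau> \<in> X\<close> by auto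
  then have "finite \<tau>" "card \<tau> = d" "\<tau> \<subseteq> {0..<n}"
    using finite_face[OF \<tau>] unfolding faces_def by auto
  define A where "A = (\<lambda>w. insert w \<tau>) ` ({0..<n} - \<tau>)"
  define R where "R = {\<rho>. \<rho> \<subseteq> \<tau> \<and> card \<rho> = d - 1}"
  define W where "W = (\<Union>\<rho>\<in>R. {\<tau>' \<in> X. \<rho> \<subseteq> \<tau>'})"
  have "finite R"
    unfolding R_def by (rule finite_subset[of _ "Pow \<tau>"]) (use \<open>finite \<tau>\<close> in auto)
  have "finite X"
    using X finite_faces finite_subset by blast
  have lonely: "A - (\<lambda>\<tau>'. \<tau> \<union> \<tau>') ` W \<subseteq> lonely_cofaces n d X \<tau>"
    unfolding A_def W_def R_def by (rule insert_cofaces_diff_subset_lonely_cofaces[OF X \<open>\<tau> \<in> X\<close>])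
  have "finite W"
    unfolding W_def using \<open>finite R\<close> \<open>finite X\<close> by auto
  have "card A - card W \<le> card A - card ((\<lambda>\<tau>'. \<tau> \<union> \<tau>') ` W)"
    using card_image_le[OF \<open>finite W\<close>] by (rule diff_le_mono2)
  also have "\<dots> \<le> card (A - (\<lambda>\<tau>'. \<tau> \<union> \<tau>') ` W)"
    using \<open>finite W\<close> by (intro diff_card_le_card_Diff) simp
  also have "\<dots> \<le> card (lonely_cofaces n d X \<tau>)"
    using lonely by (rule card_mono[rotated]) (simp add: lonely_cofaces_def finite_faces)
  finally have lonely_ge: "card A - card W \<le> card (lonely_cofaces n d X \<tau>)" .
  have "q * card W \<le> q * (\<Sum>\<rho>\<in>R. face_degree X \<rho>)"
    unfolding W_def face_degree_def by (intro mult_le_mono2 card_UN_le[OF \<open>finite R\<close>])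
  also have "\<dots> \<le> (\<Sum>\<rho>\<in>R. n)"
    unfolding sum_distrib_left using light by (intro sum_mono) (auto simp: R_def)
  also have "\<dots> = d * n"
    using card_facets[OF \<open>finite \<tau>\<close> \<open>card \<tau> = d\<close> \<open>d \<ge> 1\<close>] by (simp add: R_def)
  finally have "real q * real (card W) \<le> real d * real n"
    by (metis of_nat_le_iff of_nat_mult)
  then have "real (card W) \<le> real d * real n / real q"
    using \<open>q > 0\<close> by (simp add: field_simps)
  moreover have "card A = n - d"
    unfolding A_def by (rule card_insert_cofaces[OF \<tau>])
  moreover have "d \<le> n"
    using card_mono[of "{0..<n}" \<tau>] \<open>\<tau> \<subseteq> {0..<n}\<close> \<open>card \<tau> = d\<close> by simp
  ultimately show ?thesis
    using lonely_ge by linarith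
qed

definition heavy_ridges :: "nat \<Rightarrow> nat \<Rightarrow> nat \<Rightarrow> nat set set \<Rightarrow> nat set set" where
  "heavy_ridges n d q X = {\<rho> \<in> faces n (d - 1). n < q * face_degree X \<rho>}"

definition faces_through :: "nat \<Rightarrow> nat \<Rightarrow> nat set set \<Rightarrow> nat set set" where
  "faces_through n d H = {\<tau> \<in> faces n d. \<exists>\<rho>\<in>H. \<rho> \<subseteq> \<tau>}"

lemma finite_faces_through: "finite (faces_through n d H)"
  unfolding faces_through_def using finite_faces by simp

definition light_faces :: "nat \<Rightarrow> nat \<Rightarrow> nat \<Rightarrow> nat set set \<Rightarrow> nat set set" where
  "light_faces n d q X = X - faces_through n d (heavy_ridges n d q X)"

lemma card_heavy_ridges_le:
  assumes "d \<ge> 1" and X: "X \<subseteq> faces n d"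
  shows "n * card (heavy_ridges n d q X) \<le> q * d * card X"
proof -
  let ?H = "heavy_ridges n d q X"
  have "finite X"
    using X finite_faces finite_subset by blast
  have "finite ?H"
    unfolding heavy_ridges_def using finite_faces by simp
  have "(\<Sum>\<rho>\<in>?H. face_degree X \<rho>) = (\<Sum>\<rho>\<in>?H. \<Sum>\<tau>\<in>{\<tau> \<in> X. \<rho> \<subseteq> \<tau>}. 1)"
    unfolding face_degree_def by simp
  also have "\<dots> = (\<Sum>\<tau>\<in>X. \<Sum>\<rho>\<in>{\<rho> \<in> ?H. \<rho> \<subseteq> \<tau>}. 1)"
    by (rule sum.swap_restrict[OF \<open>finite ?H\<close> \<open>finite X\<close>])
  also have "\<dots> \<le> (\<Sum>\<tau>\<in>X. d)"
  proof (rule sum_mono)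
    fix \<tau> assume "\<tau> \<in> X"
    then have \<tau>: "\<tau> \<in> faces n d"
      using X by blast
    then have "finite \<tau>" "card \<tau> = d"
      using finite_face[OF \<tau>] unfolding faces_def by auto
    have "{\<rho> \<in> ?H. \<rho> \<subseteq> \<tau>} \<subseteq> {\<rho>. \<rho> \<subseteq> \<tau> \<and> card \<rho> = d - 1}"
      unfolding heavy_ridges_def faces_def by auto
    then have "card {\<rho> \<in> ?H. \<rho> \<subseteq> \<tau>} \<le> card {\<rho>. \<rho> \<subseteq> \<tau> \<and> card \<rho> = d - 1}"
      by (rule card_mono[rotated]) (rule finite_subset[of _ "Pow \<tau>"], use \<open>finite \<tau>\<close> in auto)
    then show "(\<Sum>\<rho>\<in>{\<rho> \<in> ?H. \<rho> \<subseteq> \<tau>}. 1) \<le> d"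
      using card_facets[OF \<open>finite \<tau>\<close> \<open>card \<tau> = d\<close> \<open>d \<ge> 1\<close>] by simp
  qed
  finally have "(\<Sum>\<rho>\<in>?H. face_degree X \<rho>) \<le> d * card X"
    by (simp add: mult.commute)
  have "n * card ?H = (\<Sum>\<rho>\<in>?H. n)"
    by simp
  also have "\<dots> \<le> (\<Sum>\<rho>\<in>?H. q * face_degree X \<rho>)"
    by (rule sum_mono) (simp add: heavy_ridges_def)
  also have "\<dots> \<le> q * (d * card X)"
    unfolding sum_distrib_left[symmetric]
    using \<open>(\<Sum>\<rho>\<in>?H. face_degree X \<rho>) \<le> d * card X\<close> by simp
  finally show ?thesis
    by (simp add: mult.assoc)
qed

lemma card_faces_through_le:
  assumes "d \<ge> 1" and H: "H \<subseteq> faces n (d - 1)"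
  shows "card (faces_through n d H) \<le> card H * n"
proof -
  have "finite H"
    using H finite_faces finite_subset by blast
  have "faces_through n d H \<subseteq> (\<Union>\<rho>\<in>H. (\<lambda>w. insert w \<rho>) ` {0..<n})"
  proof
    fix \<tau> assume "\<tau> \<in> faces_through n d H"
    then obtain \<rho> where \<rho>: "\<rho> \<in> H" "\<rho> \<subseteq> \<tau>" and \<tau>: "\<tau> \<in> faces n d"
      unfolding faces_through_def by auto
    have "finite \<tau>" "card \<tau> = d" "\<tau> \<subseteq> {0..<n}" "card \<rho> = d - 1"
      using finite_face[OF \<tau>] \<tau> \<rho> H unfolding faces_def by auto
    then have "card (\<tau> - \<rho>) = 1"
      using card_Diff_subset[OF finite_subset[OF \<rho>(2)] \<rho>(2)] \<open>d \<ge> 1\<close> by simp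
    then obtain w where "\<tau> - \<rho> = {w}"
      using card_1_singletonE by blast
    then have "\<tau> = insert w \<rho>" "w \<in> {0..<n}"
      using \<rho>(2) \<open>\<tau> \<subseteq> {0..<n}\<close> by auto
    then show "\<tau> \<in> (\<Union>\<rho>\<in>H. (\<lambda>w. insert w \<rho>) ` {0..<n})"
      using \<rho>(1) by blast
  qed
  then have "card (faces_through n d H) \<le> card (\<Union>\<rho>\<in>H. (\<lambda>w. insert w \<rho>) ` {0..<n})"
    by (rule card_mono[rotated]) (simp add: \<open>finite H\<close>)
  also have "\<dots> \<le> (\<Sum>\<rho>\<in>H. card ((\<lambda>w. insert w \<rho>) ` {0..<n}))"
    by (rule card_UN_le[OF \<open>finite H\<close>])
  also have "\<dots> \<le> (\<Sum>\<rho>\<in>H. n)"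
    by (rule sum_mono) (metis card_atLeastLessThan card_image_le finite_atLeastLessThan diff_zero)
  finally show ?thesis
    by simp
qed

lemma light_face_facet_degree_le:
  assumes X: "X \<subseteq> faces n d" and \<tau>: "\<tau> \<in> light_faces n d q X"
    and "\<rho> \<subseteq> \<tau>" "card \<rho> = d - 1"
  shows "q * face_degree X \<rho> \<le> n"
proof (rule ccontr)
  assume "\<not> q * face_degree X \<rho> \<le> n"
  moreover have "\<tau> \<in> faces n d"
    using X \<tau> unfolding light_faces_def by auto
  ultimately have "\<rho> \<in> heavy_ridges n d q X"
    using assms(3,4) unfolding heavy_ridges_def faces_def by auto
  then show False
    using \<tau> \<open>\<tau> \<in> faces n d\<close> assms(3) unfolding light_faces_def faces_through_def by auto
qed

lemma card_light_faces_mult_le_beta: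
  assumes X: "X \<subseteq> faces n d" and "d \<ge> 1" "q > 0"
  shows "real (card (light_faces n d q X)) * (real n - real d - real d * real n / real q)
           \<le> real (beta n d X)"
proof -
  let ?L = "light_faces n d q X"
  have "finite ?L"
    using X finite_faces finite_subset unfolding light_faces_def by blast
  have "real (card ?L) * (real n - real d - real d * real n / real q)
      = (\<Sum>\<tau>\<in>?L. real n - real d - real d * real n / real q)"
    by simp
  also have "\<dots> \<le> (\<Sum>\<tau>\<in>?L. real (card (lonely_cofaces n d X \<tau>)))"
  proof (rule sum_mono)
    fix \<tau> assume "\<tau> \<in> ?L"
    moreover from this have "\<tau> \<in> X"
      unfolding light_faces_def by blast
    ultimately show "real n - real d - real d * real n / real q \<le> real (card (lonely_cofaces n d X \<tau>))"
      using card_lonely_cofaces_ge[OF X _ \<open>d \<ge> 1\<close> \<open>q > 0\<close>] light_face_facet_degree_le[OF X]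
      by presburger
  qed
  also have "\<dots> \<le> real (beta n d X)"
    using sum_card_lonely_cofaces_le_beta[OF \<open>finite ?L\<close>] by (simp flip: of_nat_sum)
  finally show ?thesis .
qed

lemma card_sparse_ridge_sets_le:
  assumes "n \<ge> 1" "d \<ge> 1"
  shows "card {H. H \<subseteq> faces n (d - 1) \<and> n * card H \<le> M} \<le> 2 ^ (d * M)"
proof -
  define m where "m = M div n"
  have "{H. H \<subseteq> faces n (d - 1) \<and> n * card H \<le> M} \<subseteq> {H. H \<subseteq> faces n (d - 1) \<and> card H \<le> m}"
    unfolding m_def using \<open>n \<ge> 1\<close> by (auto simp: less_eq_div_iff_mult_less_eq mult.commute)
  then have "card {H. H \<subseteq> faces n (d - 1) \<and> n * card H \<le> M}
      \<le> card {H. H \<subseteq> faces n (d - 1) \<and> card H \<le> m}"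
    by (rule card_mono[rotated]) (rule finite_subset[of _ "Pow (faces n (d - 1))"], auto simp: finite_faces)
  also have "\<dots> \<le> (card (faces n (d - 1)) + 1) ^ m"
    by (rule card_subsets_card_le[OF finite_faces])
  also have "\<dots> \<le> (2 ^ (n * (d - 1) + 1)) ^ m"
  proof (rule power_mono)
    have "card (faces n (d - 1)) \<le> n ^ (d - 1)"
      using card_faces choose_le_pow by simp
    also have "\<dots> \<le> (2 ^ n) ^ (d - 1)"
      by (intro power_mono) (auto intro: less_imp_le less_exp)
    finally have "card (faces n (d - 1)) \<le> 2 ^ (n * (d - 1))"
      by (simp add: power_mult)
    moreover have "(1::nat) \<le> 2 ^ (n * (d - 1))"
      by simp
    ultimately show "card (faces n (d - 1)) + 1 \<le> 2 ^ (n * (d - 1) + 1)"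
      unfolding power_add power_one_right by linarith
  qed simp
  also have "\<dots> = 2 ^ ((d - 1) * (n * m) + m)"
    unfolding power_mult[symmetric] by (simp add: algebra_simps)
  also have "\<dots> \<le> 2 ^ (d * M)"
  proof (rule power_increasing)
    have "n * m \<le> M" "m \<le> M"
      unfolding m_def by (simp_all add: mult.commute)
    then have "(d - 1) * (n * m) + m \<le> (d - 1) * M + M"
      by (intro add_mono mult_le_mono2)
    also have "\<dots> = d * M"
      using \<open>d \<ge> 1\<close> by (cases d) auto
    finally show "(d - 1) * (n * m) + m \<le> d * M" .
  qed simp
  finally show ?thesis .
qed

text \<open>The factor \<open>exp n\<close> absorbs the \<open>1 / j!\<close> of the binomial coefficient together with
  one factor \<open>n\<close> per face.\<close>
lemma card_face_sets_of_card_le: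
  assumes "d \<ge> 1"
  shows "real (card {B. B \<subseteq> faces n d \<and> card B = j}) \<le> real n ^ ((d - 1) * j) * exp (real n)"
proof -
  let ?N = "card (faces n d)"
  have "real (?N choose j) * fact j \<le> real ?N ^ j"
    using of_nat_mono[OF binomial_fact_pow[of ?N j], where 'a = real] by simp
  then have "real (card {B. B \<subseteq> faces n d \<and> card B = j}) \<le> real ?N ^ j / fact j"
    using n_subsets[OF finite_faces, of n d j] by (simp add: pos_le_divide_eq)
  also have "\<dots> \<le> (real n ^ d) ^ j / fact j"
  proof -
    have "?N \<le> n ^ d"
      by (simp add: card_faces choose_le_pow)
    then have "real ?N \<le> real n ^ d"
      using of_nat_mono[where 'a = real] by fastforce
    then show ?thesis
      by (intro divide_right_mono power_mono) simp_all
  qed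
  also have "\<dots> = real n ^ ((d - 1) * j) * (real n ^ j / fact j)"
  proof -
    have "d * j = (d - 1) * j + j"
      using \<open>d \<ge> 1\<close> by (cases d) auto
    then have "(real n ^ d) ^ j = real n ^ ((d - 1) * j) * real n ^ j"
      by (simp only: power_mult[symmetric] power_add)
    then show ?thesis
      by simp
  qed
  also have "\<dots> \<le> real n ^ ((d - 1) * j) * exp (real n)"
    by (rule mult_left_mono[OF pow_div_fact_le_exp]) simp_all
  finally show ?thesis .
qed

lemma card_small_face_sets_le:
  assumes "n \<ge> 1" "d \<ge> 1"
  shows "real (card {B. B \<subseteq> faces n d \<and> card B \<le> m \<and> real (card B) \<le> Y})
           \<le> real (m + 1) * (real n powr ((real d - 1) * Y) * exp (real n))"
proof -
  define J where "J = {j. j \<le> m \<and> real j \<le> Y}"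
  let ?S = "\<lambda>j. {B. B \<subseteq> faces n d \<and> card B = j}"
  have "finite J" "card J \<le> m + 1"
    unfolding J_def using card_mono[of "{..m}" "{j. j \<le> m \<and> real j \<le> Y}"] by auto
  have "{B. B \<subseteq> faces n d \<and> card B \<le> m \<and> real (card B) \<le> Y} = (\<Union>j\<in>J. ?S j)"
    unfolding J_def by auto
  then have "card {B. B \<subseteq> faces n d \<and> card B \<le> m \<and> real (card B) \<le> Y} \<le> (\<Sum>j\<in>J. card (?S j))"
    using card_UN_le[OF \<open>finite J\<close>] by simp
  then have "real (card {B. B \<subseteq> faces n d \<and> card B \<le> m \<and> real (card B) \<le> Y})
      \<le> (\<Sum>j\<in>J. real (card (?S j)))"
    by (simp only: of_nat_sum[symmetric] of_nat_le_iff)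
  also have "\<dots> \<le> (\<Sum>j\<in>J. real n powr ((real d - 1) * Y) * exp (real n))"
  proof (rule sum_mono)
    fix j assume "j \<in> J"
    have "real ((d - 1) * j) = (real d - 1) * real j"
      using \<open>d \<ge> 1\<close> by (simp add: of_nat_diff)
    also have "\<dots> \<le> (real d - 1) * Y"
      using \<open>j \<in> J\<close> \<open>d \<ge> 1\<close> unfolding J_def by (intro mult_left_mono) auto
    finally have "real n powr real ((d - 1) * j) \<le> real n powr ((real d - 1) * Y)"
      using \<open>n \<ge> 1\<close> by (intro powr_mono) auto
    then have "real n ^ ((d - 1) * j) \<le> real n powr ((real d - 1) * Y)"
      using \<open>n \<ge> 1\<close> powr_realpow[of "real n" "(d - 1) * j"] by simp
    then show "real (card (?S j)) \<le> real n powr ((real d - 1) * Y) * exp (real n)"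
      using card_face_sets_of_card_le[OF \<open>d \<ge> 1\<close>, of n j]
      by (meson exp_ge_zero mult_right_mono order_trans)
  qed
  also have "\<dots> \<le> real (m + 1) * (real n powr ((real d - 1) * Y) * exp (real n))"
    using \<open>card J \<le> m + 1\<close> by (simp add: mult_right_mono)
  finally show ?thesis .
qed

lemma light_faces_density_arith:
  fixes D n b k \<theta> :: real
  assumes "D \<ge> 2" "n \<ge> 8 * D ^ 4" "b \<ge> 0" "k \<ge> 0" "\<theta> \<ge> 1 / (2 * D)"
    and lonely_le: "b * (n - D - D * n / (8 * D ^ 4)) \<le> (1 - \<theta>) * k * n"
  shows "b \<le> k * (1 - \<theta> * (1 - 1 / (2 * D ^ 2)))"
proof -
  define a where "a = 1 / (4 * D ^ 3)"
  define e where "e = 1 / (2 * D ^ 2)"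
  have "D > 0" "n > 0" "\<theta> \<ge> 0"
    using assms(1,2,5) by (auto intro: less_le_trans[of 0 "8 * D ^ 4"] order_trans[rotated])
  have "D * n / (8 * D ^ 4) = n / (8 * D ^ 3)" "D \<le> n / (8 * D ^ 3)"
    using assms(2) \<open>D > 0\<close> by (simp_all add: field_simps power_def)
  then have "n * (1 - a) \<le> n - D - D * n / (8 * D ^ 4)"
    unfolding a_def using \<open>D > 0\<close> by (simp add: field_simps power_def)
  then have "b * (n * (1 - a)) \<le> (1 - \<theta>) * k * n"
    using lonely_le \<open>b \<ge> 0\<close> by (meson mult_left_mono order_trans)
  then have "(b * (1 - a)) * n \<le> ((1 - \<theta>) * k) * n"
    by (simp add: algebra_simps)
  then have "b * (1 - a) \<le> (1 - \<theta>) * k"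
    using \<open>n > 0\<close> by simp
  \<comment> \<open>\<open>\<theta> \<ge> 1 / (2 D)\<close> gives \<open>\<theta> e \<ge> a\<close>, which pays for the loss factor \<open>1 - a\<close>\<close>
  have "\<theta> * e \<ge> a"
    using mult_right_mono[OF assms(5), of e] \<open>D > 0\<close>
    unfolding a_def e_def by (simp add: field_simps power_def)
  moreover have "D ^ 2 \<ge> 1" "D ^ 3 \<ge> 1"
    using assms(1) by (simp_all add: one_le_power)
  then have "e \<le> 1" "a < 1"
    unfolding a_def e_def using \<open>D > 0\<close> by (simp_all add: divide_le_eq_1 divide_less_eq_1)
  moreover have "a \<ge> 0"
    unfolding a_def using \<open>D > 0\<close> by simp
  ultimately have "1 - \<theta> \<le> (1 - a) * (1 - \<theta> * (1 - e))"
    using \<open>\<theta> \<ge> 0\<close> mult_nonneg_nonneg[of "a * \<theta>" "1 - e"] by (simp add: algebra_simps)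
  then have "b * (1 - a) \<le> (k * (1 - \<theta> * (1 - e))) * (1 - a)"
    using \<open>b * (1 - a) \<le> (1 - \<theta>) * k\<close> mult_right_mono[OF _ \<open>k \<ge> 0\<close>]
    by (smt (verit) mult.commute mult.left_commute)
  then show ?thesis
    unfolding e_def using \<open>a < 1\<close> by simp
qed

lemma card_light_faces_le:
  assumes "d \<ge> 2" "8 * d ^ 4 \<le> n" and X: "X \<subseteq> faces n d" "card X = k"
    and beta: "real (beta n d X) \<le> (1 - \<theta>) * real k * real n" and "\<theta> \<ge> 1 / (2 * real d)"
  shows "real (card (light_faces n d (8 * d ^ 4) X)) \<le> real k * (1 - \<theta> * (1 - 1 / (2 * real d ^ 2)))"
proof (rule light_faces_density_arith)
  have "real (card (light_faces n d (8 * d ^ 4) X))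
          * (real n - real d - real d * real n / real (8 * d ^ 4)) \<le> real (beta n d X)"
    using \<open>d \<ge> 2\<close> by (intro card_light_faces_mult_le_beta[OF X(1)]) simp_all
  then show "real (card (light_faces n d (8 * d ^ 4) X))
          * (real n - real d - real d * real n / (8 * real d ^ 4)) \<le> (1 - \<theta>) * real k * real n"
    using beta by simp
  show "8 * real d ^ 4 \<le> real n"
    using of_nat_mono[OF \<open>8 * d ^ 4 \<le> n\<close>, where 'a = real] by simp
qed (use assms in simp_all)

lemma card_ridge_sets_with_faces_through_le:
  assumes "n \<ge> 1" "d \<ge> 1"
  shows "card (SIGMA H:{H. H \<subseteq> faces n (d - 1) \<and> n * card H \<le> M}. Pow (faces_through n d H))
           \<le> 2 ^ ((d + 1) * M)"
proof -
  let ?FH = "{H. H \<subseteq> faces n (d - 1) \<and> n * card H \<le> M}"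
  have "finite ?FH"
    by (rule finite_subset[of _ "Pow (faces n (d - 1))"]) (auto simp: finite_faces)
  then have "card (SIGMA H:?FH. Pow (faces_through n d H)) = (\<Sum>H\<in>?FH. 2 ^ card (faces_through n d H))"
    by (simp add: card_SigmaI card_Pow finite_faces_through)
  also have "\<dots> \<le> (\<Sum>H\<in>?FH. 2 ^ M)"
  proof (rule sum_mono)
    fix H assume "H \<in> ?FH"
    then have "card (faces_through n d H) \<le> M"
      using card_faces_through_le[OF \<open>d \<ge> 1\<close>, of H n] by (simp add: mult.commute)
    then show "2 ^ card (faces_through n d H) \<le> (2::nat) ^ M"
      by (rule power_increasing) simp
  qed
  also have "\<dots> \<le> 2 ^ (d * M) * 2 ^ M"
    using card_sparse_ridge_sets_le[OF assms] by simp
  finally show ?thesis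
    by (simp add: power_add mult.commute)
qed

lemma low_beta_complexes_subset_encodings:
  assumes "d \<ge> 2" "8 * d ^ 4 \<le> n" "\<theta> \<ge> 1 / (2 * real d)"
  defines "q \<equiv> 8 * d ^ 4"
  shows "{X. X \<subseteq> faces n d \<and> card X = k \<and> real (beta n d X) \<le> (1 - \<theta>) * real k * real n}
           \<subseteq> (\<lambda>((H, A), B). A \<union> B) `
               ((SIGMA H:{H. H \<subseteq> faces n (d - 1) \<and> n * card H \<le> q * d * k}. Pow (faces_through n d H))
                \<times> {B. B \<subseteq> faces n d \<and> card B \<le> k \<and>
                       real (card B) \<le> real k * (1 - \<theta> * (1 - 1 / (2 * real d ^ 2)))})"
    (is "_ \<subseteq> _ ` (?Sg \<times> ?FB)")
proof
  fix X assume "X \<in> {X. X \<subseteq> faces n d \<and> card X = k \<and> real (beta n d X) \<le> (1 - \<theta>) * real k * real n}"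
  then have X: "X \<subseteq> faces n d" "card X = k" "real (beta n d X) \<le> (1 - \<theta>) * real k * real n"
    by auto
  let ?H = "heavy_ridges n d q X"
  let ?L = "light_faces n d q X"
  have "n * card ?H \<le> q * d * k"
    using card_heavy_ridges_le[of d X n q] assms(1) X(1,2) by simp
  then have "(?H, X \<inter> faces_through n d ?H) \<in> ?Sg"
    unfolding heavy_ridges_def by auto
  moreover have "finite X"
    using X(1) finite_faces finite_subset by blast
  then have "card ?L \<le> k"
    using card_mono[of X ?L] X(2) unfolding light_faces_def by auto
  then have "?L \<in> ?FB"
    using card_light_faces_le[OF assms(1,2) X assms(3)] X(1)
    unfolding q_def light_faces_def by auto
  moreover have "X = (X \<inter> faces_through n d ?H) \<union> ?L"
    unfolding light_faces_def by auto
  ultimately show "X \<in> (\<lambda>((H, A), B). A \<union> B) ` (?Sg \<times> ?FB)"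
    by (intro image_eqI[of _ _ "((?H, X \<inter> faces_through n d ?H), ?L)"]) auto
qed

lemma card_low_beta_complexes_le:
  assumes "d \<ge> 2" "8 * d ^ 4 \<le> n" "\<theta> \<ge> 1 / (2 * real d)"
  defines "q \<equiv> 8 * d ^ 4" and "y \<equiv> 1 - \<theta> * (1 - 1 / (2 * real d ^ 2))"
  shows "real (card {X. X \<subseteq> faces n d \<and> card X = k \<and>
                        real (beta n d X) \<le> (1 - \<theta>) * real k * real n})
           \<le> 2 ^ ((d + 1) * (q * d * k))
              * (real (k + 1) * (real n powr ((real d - 1) * (real k * y)) * exp (real n)))"
proof -
  define S where "S = {X. X \<subseteq> faces n d \<and> card X = k \<and> real (beta n d X) \<le> (1 - \<theta>) * real k * real n}"
  define FB where "FB = {B. B \<subseteq> faces n d \<and> card B \<le> k \<and> real (card B) \<le> real k * y}"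
  define Sg where "Sg = (SIGMA H:{H. H \<subseteq> faces n (d - 1) \<and> n * card H \<le> q * d * k}. Pow (faces_through n d H))"
  have "d \<ge> 1"
    using assms(1) by simp
  then have "0 < 8 * d ^ 4"
    by simp
  then have "n \<ge> 1"
    using assms(2) by linarith
  have "finite FB"
    unfolding FB_def by (rule finite_subset[of _ "Pow (faces n d)"]) (auto simp: finite_faces)
  have "finite Sg"
    unfolding Sg_def
    by (rule finite_SigmaI, rule finite_subset[of _ "Pow (faces n (d - 1))"])
      (auto simp: finite_faces finite_faces_through)
  have "S \<subseteq> (\<lambda>((H, A), B). A \<union> B) ` (Sg \<times> FB)"
    using low_beta_complexes_subset_encodings[OF assms(1-3), of k]
    unfolding S_def Sg_def FB_def q_def y_def .
  then have "card S \<le> card ((\<lambda>((H, A), B). A \<union> B) ` (Sg \<times> FB))"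
    by (rule card_mono[rotated]) (simp add: \<open>finite Sg\<close> \<open>finite FB\<close>)
  also have "\<dots> \<le> card Sg * card FB"
    using card_image_le[of "Sg \<times> FB"] \<open>finite Sg\<close> \<open>finite FB\<close> by (simp add: card_cartesian_product)
  also have "\<dots> \<le> 2 ^ ((d + 1) * (q * d * k)) * card FB"
    unfolding Sg_def using card_ridge_sets_with_faces_through_le[OF \<open>n \<ge> 1\<close> \<open>d \<ge> 1\<close>] by simp
  finally have "real (card S) \<le> 2 ^ ((d + 1) * (q * d * k)) * real (card FB)"
    using of_nat_mono[where 'a = real] by fastforce
  also have "\<dots> \<le> 2 ^ ((d + 1) * (q * d * k))
                  * (real (k + 1) * (real n powr ((real d - 1) * (real k * y)) * exp (real n)))"
    using card_small_face_sets_le[OF \<open>n \<ge> 1\<close> \<open>d \<ge> 1\<close>] unfolding FB_def by simp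
  finally show ?thesis
    unfolding S_def .
qed

lemma card_low_beta_complexes_le_power:
  assumes "d \<ge> 2" "8 * d ^ 4 \<le> n" "real k \<ge> real n / (3 * real d)" "\<theta> \<ge> 1 / (2 * real d)"
  defines "c \<equiv> 2 ^ ((d + 1) * (8 * d ^ 4 * d) + 1) * exp (3 * real d)"
    and "P \<equiv> real n powr ((real d - 1) * (1 - \<theta> * (1 - 1 / (2 * real d ^ 2))))"
  shows "real (card {X. X \<subseteq> faces n d \<and> card X = k \<and>
                        real (beta n d X) \<le> (1 - \<theta>) * real k * real n}) \<le> (c * P) ^ k"
proof -
  let ?A = "(2::real) ^ ((d + 1) * (8 * d ^ 4 * d * k))"
  let ?R = "real n powr ((real d - 1) * (real k * (1 - \<theta> * (1 - 1 / (2 * real d ^ 2)))))"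
  have "0 < 8 * d ^ 4"
    using assms(1) by simp
  then have "real n \<noteq> 0"
    using assms(2) by linarith
  then have "?R = P ^ k"
    unfolding P_def by (simp add: powr_power mult_ac)
  moreover have "real (k + 1) \<le> 2 ^ k"
    using of_nat_mono[OF Suc_le_eq[THEN iffD2, OF less_exp[of k]], where 'a = real] by simp
  moreover have "exp (real n) \<le> exp (3 * real d) ^ k"
    using assms(1,3) by (simp add: exp_of_nat_mult[symmetric] field_simps)
  ultimately have "?A * (real (k + 1) * (?R * exp (real n))) \<le> ?A * (2 ^ k * (P ^ k * exp (3 * real d) ^ k))"
    unfolding P_def by (intro mult_left_mono mult_mono) simp_all
  also have "\<dots> = (?A * 2 ^ k) * exp (3 * real d) ^ k * P ^ k"
    by (simp add: mult_ac)
  also have "?A * 2 ^ k = (2 ^ ((d + 1) * (8 * d ^ 4 * d) + 1)) ^ k"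
    by (simp add: power_mult[symmetric] power_add[symmetric] algebra_simps)
  also have "\<dots> * exp (3 * real d) ^ k * P ^ k = (c * P) ^ k"
    unfolding c_def by (simp add: power_mult_distrib)
  finally show ?thesis
    using card_low_beta_complexes_le[OF assms(1,2,4), of k] by simp
qed

theorem lemma8:
  fixes d :: nat
  assumes "d \<ge> 2"
  shows "\<exists>c::real. c > 0 \<and> (\<exists>N::nat. \<forall>n\<ge>N. \<forall>k::nat. \<forall>\<theta>::real.
           real k \<ge> real n / (3 * real d) \<and> \<theta> \<ge> 1 / (2 * real d) \<longrightarrow>
           real (card {X. X \<subseteq> faces n d \<and> card X = k \<and>
                         real (beta n d X) \<le> (1 - \<theta>) * real k * real n})
             \<le> (c * real n powr ((real d - 1) * (1 - \<theta> * (1 - 1 / (2 * (real d)^2))))) ^ k)"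
proof -
  define c :: real where "c = 2 ^ ((d + 1) * (8 * d ^ 4 * d) + 1) * exp (3 * real d)"
  have "c > 0"
    unfolding c_def by simp
  then show ?thesis
    using card_low_beta_complexes_le_power[OF assms] unfolding c_def by blast
qed

end
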